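(* Let $H$ be a separable complex Hilbert space, $(\Omega,\mu)$ a measure space with positive measure, let $K\in B(H)$ have closed range, let $F:\Omega\to H$ be a Parseval continuous $K$-frame of $H$, and let $\tilde F(\omega)=K^{\dagger}F(\omega)$ be its canonical dual continuous $K$-Bessel sequence. Then: (1) $\tilde F$ is a Parseval continuous frame for the Hilbert space $(\mathcal{N}(K))^{\perp}$, i.e. $\int_\Omega|\langle f,\tilde F(\omega)\rangle|^2\,d\mu(\omega)=\|f\|^2$ for all $f\in(\mathcal{N}(K))^{\perp}$; (2) $\tilde F$ is a Parseval continuous $K^{\dagger}K$-frame of $H$, i.e. $\int_\Omega|\langle f,\tilde F(\omega)\rangle|^2\,d\mu(\omega)=\|(K^{\dagger}K)^{\ast}f\|^2$ for all $f\in H$; and $K\tilde F$ (i.e. $\omega\mapsto KK^{\dagger}F(\omega)$) is a Parseval continuous $K$-frame of $H$.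
   Context: $\mathcal{N}(K)$ is the null space of $K$. A map $F:\Omega\to H$ is weakly measurable if $\omega\mapsto\langle f,F(\omega)\rangle$ is measurable for every $f\in H$. For $L\in B(H)$, a Parseval continuous $L$-frame is a weakly measurable $F$ with $\int_\Omega|\langle f,F(\omega)\rangle|^2\,d\mu(\omega)=\|L^{\ast}f\|^2$ for all $f\in H$. $K^{\dagger}$ denotes the Moore–Penrose pseudo-inverse of the closed-range operator $K$. The canonical dual continuous $K$-Bessel sequence of a Parseval continuous $K$-frame $F$ is $K^{\dagger}F$; it satisfies $Kf=\int_\Omega\langle f,K^\dagger F(\omega)\rangle F(\omega)\,d\mu(\omega)$ for all $f\in H$. *)

theory Defs
  imports "HOL-Analysis.Analysis" "HOL-Probability.Probability"
begin

class complex_vector = real_vector +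
  fixes scaleC :: "complex \<Rightarrow> 'a \<Rightarrow> 'a" (infixr \<open>*\<^sub>C\<close> 75)
  assumes scaleC_add_right: "a *\<^sub>C (x + y) = a *\<^sub>C x + a *\<^sub>C y"
    and scaleC_add_left: "(a + b) *\<^sub>C x = a *\<^sub>C x + b *\<^sub>C x"
    and scaleC_scaleC: "a *\<^sub>C (b *\<^sub>C x) = (a * b) *\<^sub>C x"
    and scaleC_one: "1 *\<^sub>C x = x"
    and scaleR_scaleC: "scaleR r x = complex_of_real r *\<^sub>C x"

text \<open>Complex inner product, linear in the first argument, conjugate linear in the second.\<close>
class complex_inner = complex_vector + real_normed_vector +
  fixes cinner :: "'a \<Rightarrow> 'a \<Rightarrow> complex"
  assumes cinner_commute: "cinner x y = cnj (cinner y x)"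
    and cinner_add_left: "cinner (x + y) z = cinner x z + cinner y z"
    and cinner_scaleC_left: "cinner (r *\<^sub>C x) y = r * cinner x y"
    and cinner_ge_zero: "0 \<le> Re (cinner x x)"
    and cinner_eq_zero_iff: "cinner x x = 0 \<longleftrightarrow> x = 0"
    and norm_eq_sqrt_cinner: "norm x = sqrt (Re (cinner x x))"

class chilbert_space = complex_inner + complete_space

definition separable_space :: "'a::topological_space itself \<Rightarrow> bool" where
  "separable_space _ \<longleftrightarrow> (\<exists>D::'a set. countable D \<and> closure D = UNIV)"

definition bounded_clinear :: "('a::complex_inner \<Rightarrow> 'b::complex_inner) \<Rightarrow> bool" where
  "bounded_clinear K \<longleftrightarrow> bounded_linear K \<and> (\<forall>c x. K (c *\<^sub>C x) = c *\<^sub>C K x)"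

definition null_space :: "('a \<Rightarrow> 'b::zero) \<Rightarrow> 'a set" where
  "null_space K = {x. K x = 0}"

definition orth_compl :: "'a::complex_inner set \<Rightarrow> 'a set" where
  "orth_compl S = {x. \<forall>y\<in>S. cinner x y = 0}"

definition adjoint :: "('a::complex_inner \<Rightarrow> 'b::complex_inner) \<Rightarrow> 'b \<Rightarrow> 'a" where
  "adjoint K = (THE A. \<forall>x y. cinner (K x) y = cinner x (A y))"

definition pseudo_inverse :: "('a::complex_inner \<Rightarrow> 'b::complex_inner) \<Rightarrow> 'b \<Rightarrow> 'a" where
  "pseudo_inverse K = (THE A. bounded_clinear A \<and> K \<circ> A \<circ> K = K \<and> A \<circ> K \<circ> A = A
      \<and> adjoint (K \<circ> A) = K \<circ> A \<and> adjoint (A \<circ> K) = A \<circ> K)"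

definition weakly_measurable :: "'b measure \<Rightarrow> ('b \<Rightarrow> 'a::complex_inner) \<Rightarrow> bool" where
  "weakly_measurable M F \<longleftrightarrow> (\<forall>f. (\<lambda>\<omega>. cinner f (F \<omega>)) \<in> borel_measurable M)"

definition parseval_cont_L_frame ::
  "'b measure \<Rightarrow> ('a::complex_inner \<Rightarrow> 'a) \<Rightarrow> ('b \<Rightarrow> 'a) \<Rightarrow> bool" where
  "parseval_cont_L_frame M L F \<longleftrightarrow> weakly_measurable M F \<and>
     (\<forall>f. (\<integral>\<^sup>+\<omega>. ennreal ((cmod (cinner f (F \<omega>)))\<^sup>2) \<partial>M) = ennreal ((norm (adjoint L f))\<^sup>2))"

definition parseval_cont_frame_on ::
  "'b measure \<Rightarrow> 'a::complex_inner set \<Rightarrow> ('b \<Rightarrow> 'a) \<Rightarrow> bool" where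
  "parseval_cont_frame_on M V F \<longleftrightarrow> (\<forall>\<omega>. F \<omega> \<in> V) \<and>
     (\<forall>f\<in>V. (\<lambda>\<omega>. cinner f (F \<omega>)) \<in> borel_measurable M) \<and>
     (\<forall>f\<in>V. (\<integral>\<^sup>+\<omega>. ennreal ((cmod (cinner f (F \<omega>)))\<^sup>2) \<partial>M) = ennreal ((norm f)\<^sup>2))"

end

theory Submission
  imports Defs
begin

text \<open>
  Write A for the pseudo-inverse of K. If T is bounded, then
  \<integral> |\<langle>f, T F \<omega>\<rangle>|^2 = \<integral> |\<langle>T* f, F \<omega>\<rangle>|^2 = \<parallel>K* T* f\<parallel>^2 = \<parallel>(T K)* f\<parallel>^2,
  so T F is a Parseval continuous T K-frame. Taking T = A gives the second claim, and
  T = K A gives the third because K A K = K. The Penrose equations make A K self-adjoint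
  and the identity on the orthogonal complement of the null space of K, where A takes its
  values; so the A K-frame A F is a Parseval frame for that subspace.

  The real work is the existence of a bounded operator satisfying the Penrose equations:
  A y is the unique vector orthogonal to the null space that K maps to the orthogonal
  projection of y onto the range. Its boundedness is where closedness of the range enters,
  through the open mapping argument (Baire category) giving preimages of norm at most
  C \<parallel>y\<parallel>.
\<close>

section \<open>Complex inner product spaces\<close>

lemma scaleC_zero_left [simp]: "(0::complex) *\<^sub>C (x::'a::complex_vector) = 0"
  by (metis scaleR_scaleC scaleR_zero_left of_real_0)

lemma scaleC_zero_right [simp]: "c *\<^sub>C (0::'a::complex_vector) = 0"
  by (metis add_cancel_right_right scaleC_add_right add_0)

lemma scaleC_minus_left: "(- c) *\<^sub>C (x::'a::complex_vector) = - (c *\<^sub>C x)"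
  by (metis add_eq_0_iff scaleC_add_left scaleC_zero_left neg_eq_iff_add_eq_0 add.right_inverse)

lemma scaleC_minus_right: "c *\<^sub>C (- x::'a::complex_vector) = - (c *\<^sub>C x)"
  by (metis add_eq_0_iff scaleC_add_right scaleC_zero_right add.right_inverse)

lemma scaleC_diff_right: "c *\<^sub>C (x - y::'a::complex_vector) = c *\<^sub>C x - c *\<^sub>C y"
  by (metis diff_conv_add_uminus scaleC_add_right scaleC_minus_right)

lemma cinner_zero_left [simp]: "cinner 0 (y::'a::complex_inner) = 0"
  by (metis add_cancel_right_right cinner_add_left add_0)

lemma cinner_zero_right [simp]: "cinner (y::'a::complex_inner) 0 = 0"
  by (metis cinner_commute cinner_zero_left complex_cnj_zero)

lemma cinner_add_right: "cinner (x::'a::complex_inner) (y + z) = cinner x y + cinner x z"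
  by (metis cinner_commute cinner_add_left complex_cnj_add)

lemma cinner_scaleC_right: "cinner (x::'a::complex_inner) (r *\<^sub>C y) = cnj r * cinner x y"
  by (metis cinner_commute cinner_scaleC_left complex_cnj_mult)

lemma cinner_minus_left: "cinner (- x) (y::'a::complex_inner) = - cinner x y"
  by (metis add_eq_0_iff cinner_add_left cinner_zero_left add.right_inverse)

lemma cinner_minus_right: "cinner x (- y::'a::complex_inner) = - cinner x y"
  by (metis add_eq_0_iff cinner_add_right cinner_zero_right add.right_inverse)

lemma cinner_diff_left: "cinner (x - y) (z::'a::complex_inner) = cinner x z - cinner y z"
  by (metis diff_conv_add_uminus cinner_add_left cinner_minus_left)

lemma cinner_diff_right: "cinner x (y - z::'a::complex_inner) = cinner x y - cinner x z"
  by (metis diff_conv_add_uminus cinner_add_right cinner_minus_right)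

lemma cinner_scaleR_right: "cinner x (r *\<^sub>R y::'a::complex_inner) = complex_of_real r * cinner x y"
  by (simp add: scaleR_scaleC cinner_scaleC_right)

lemma cinner_eq_zero_sym: "cinner x (y::'a::complex_inner) = 0 \<longleftrightarrow> cinner y x = 0"
  by (metis cinner_commute complex_cnj_zero_iff)

lemma power2_norm_eq_cinner: "(norm (x::'a::complex_inner))\<^sup>2 = Re (cinner x x)"
  by (simp add: norm_eq_sqrt_cinner cinner_ge_zero)

lemma cinner_self: "cinner x (x::'a::complex_inner) = complex_of_real ((norm x)\<^sup>2)"
proof -
  have "Im (cinner x x) = Im (cnj (cinner x x))"
    by (metis cinner_commute)
  then show ?thesis
    by (simp add: power2_norm_eq_cinner complex_eq_iff)
qed

lemma cinner_ext_left: "(\<And>y. cinner x y = cinner (z::'a::complex_inner) y) \<Longrightarrow> x = z"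
  by (metis cinner_diff_left cinner_eq_zero_iff eq_iff_diff_eq_0)

lemma cinner_ext_right: "(\<And>y. cinner y x = cinner y (z::'a::complex_inner)) \<Longrightarrow> x = z"
  by (metis cinner_commute cinner_ext_left)

lemma power2_norm_add:
  "(norm (a + b::'a::complex_inner))\<^sup>2 = (norm a)\<^sup>2 + (norm b)\<^sup>2 + 2 * Re (cinner a b)"
proof -
  have "Re (cinner b a) = Re (cinner a b)"
    by (metis cinner_commute complex_cnj_cnj cnj.sel(1))
  then show ?thesis
    by (simp add: power2_norm_eq_cinner cinner_add_left cinner_add_right)
qed

lemma power2_norm_diff:
  "(norm (a - b::'a::complex_inner))\<^sup>2 = (norm a)\<^sup>2 + (norm b)\<^sup>2 - 2 * Re (cinner a b)"
  using power2_norm_add[of a "- b"] by (simp add: cinner_minus_right)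

lemma pythagoras:
  "cinner a b = 0 \<Longrightarrow> (norm (a + b::'a::complex_inner))\<^sup>2 = (norm a)\<^sup>2 + (norm b)\<^sup>2"
  by (simp add: power2_norm_add)

lemma parallelogram_law_cinner:
  "(norm (a + b::'a::complex_inner))\<^sup>2 + (norm (a - b))\<^sup>2 = 2 * (norm a)\<^sup>2 + 2 * (norm b)\<^sup>2"
  by (simp add: power2_norm_add power2_norm_diff)

lemma norm_scaleC: "norm (c *\<^sub>C (x::'a::complex_inner)) = cmod c * norm x"
proof -
  have "cinner (c *\<^sub>C x) (c *\<^sub>C x) = (c * cnj c) * cinner x x"
    by (simp add: cinner_scaleC_left cinner_scaleC_right mult.assoc)
  also have "\<dots> = complex_of_real ((cmod c)\<^sup>2) * complex_of_real ((norm x)\<^sup>2)"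
    by (metis cinner_self complex_norm_square)
  finally have "(norm (c *\<^sub>C x))\<^sup>2 = (cmod c * norm x)\<^sup>2"
    by (simp add: power2_norm_eq_cinner power_mult_distrib)
  then show ?thesis
    by (simp add: power2_eq_iff_nonneg)
qed

lemma Cauchy_Schwarz_cinner: "cmod (cinner x (y::'a::complex_inner)) \<le> norm x * norm y"
proof (cases "y = 0")
  case False
  then have ny: "norm y > 0"
    by simp
  define l where "l = cinner x y / complex_of_real ((norm y)\<^sup>2)"
  have orth: "cinner (x - l *\<^sub>C y) (l *\<^sub>C y) = 0"
    using ny by (simp add: l_def cinner_diff_left cinner_scaleC_left cinner_scaleC_right cinner_self)
  have "(norm x)\<^sup>2 = (norm (x - l *\<^sub>C y))\<^sup>2 + (norm (l *\<^sub>C y))\<^sup>2"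
    using pythagoras[OF orth] by simp
  then have "(cmod l * norm y)\<^sup>2 \<le> (norm x)\<^sup>2"
    by (simp add: norm_scaleC)
  moreover have "cmod l * norm y = cmod (cinner x y) / norm y"
    using ny by (simp add: l_def norm_divide norm_power power2_eq_square norm_mult)
  ultimately have "cmod (cinner x y) / norm y \<le> norm x"
    by (metis norm_ge_zero power2_le_imp_le)
  then show ?thesis
    using ny by (simp add: divide_le_eq mult.commute)
qed simp

section \<open>Orthogonal projections\<close>

definition csubspace :: "'a::complex_vector set \<Rightarrow> bool" where
  "csubspace V \<longleftrightarrow> 0 \<in> V \<and> (\<forall>x\<in>V. \<forall>y\<in>V. x + y \<in> V) \<and> (\<forall>c. \<forall>x\<in>V. c *\<^sub>C x \<in> V)"

lemma csubspace_imp_subspace: "csubspace V \<Longrightarrow> subspace V"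
  by (simp add: csubspace_def real_vector.subspace_def scaleR_scaleC)

lemma csubspace_scaleC: "csubspace V \<Longrightarrow> x \<in> V \<Longrightarrow> c *\<^sub>C x \<in> V"
  by (simp add: csubspace_def)

lemma orth_compl_csubspace: "csubspace (orth_compl S)"
  by (simp add: csubspace_def orth_compl_def cinner_add_left cinner_scaleC_left)

lemma orth_compl_subspace: "subspace (orth_compl S)"
  by (rule csubspace_imp_subspace[OF orth_compl_csubspace])

lemma orth_compl_disjoint: "x \<in> S \<Longrightarrow> x \<in> orth_compl S \<Longrightarrow> x = 0"
  unfolding orth_compl_def using cinner_eq_zero_iff by blast

lemma csubspace_nearest_point:
  fixes V :: "'a::chilbert_space set"
  assumes V: "csubspace V" "closed V"
  shows "\<exists>p\<in>V. \<forall>v\<in>V. norm (x - p) \<le> norm (x - v)"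
proof -
  define d where "d = (INF v\<in>V. (norm (x - v))\<^sup>2)"
  have V_ne: "V \<noteq> {}"
    using V(1) by (auto simp: csubspace_def)
  have bdd: "bdd_below ((\<lambda>v. (norm (x - v))\<^sup>2) ` V)"
    by (rule bdd_belowI2[of _ 0]) simp
  have d_le: "d \<le> (norm (x - v))\<^sup>2" if "v \<in> V" for v
    unfolding d_def using bdd that by (rule cINF_lower)
  have "\<exists>v\<in>V. (norm (x - v))\<^sup>2 < d + inverse (Suc n)" for n
    using cINF_less_iff[OF V_ne bdd, of "d + inverse (Suc n)"] unfolding d_def[symmetric] by simp
  then obtain s where s_in: "\<And>n. s n \<in> V"
    and s_close: "\<And>n. (norm (x - s n))\<^sup>2 < d + inverse (Suc n)"
    by metis
  \<comment> \<open>The parallelogram law at the midpoint of v and w, which lies in V.\<close>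
  have spread: "(norm (v - w))\<^sup>2 \<le> 2 * (norm (x - v))\<^sup>2 + 2 * (norm (x - w))\<^sup>2 - 4 * d"
    if "v \<in> V" "w \<in> V" for v w
  proof -
    have "(1/2) *\<^sub>R (v + w) \<in> V"
      using csubspace_imp_subspace[OF V(1)] that by (intro subspace_scale subspace_add)
    moreover have "(x - v) + (x - w) = 2 *\<^sub>R (x - (1/2) *\<^sub>R (v + w))"
      by (simp add: algebra_simps scaleR_2)
    ultimately have "4 * d \<le> (norm ((x - v) + (x - w)))\<^sup>2"
      using d_le by (simp add: power_mult_distrib)
    then show ?thesis
      using parallelogram_law_cinner[of "x - v" "x - w"] norm_minus_commute[of v w] by simp
  qed
  have "Cauchy s"
  proof (rule CauchyI)
    fix e :: real
    assume e: "0 < e"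
    obtain N :: nat where "4 / e\<^sup>2 < N"
      using reals_Archimedean2 by blast
    then have N: "4 * inverse (Suc N) < e\<^sup>2"
      using e by (simp add: field_simps add_pos_pos add_strict_increasing)
    show "\<exists>N. \<forall>m\<ge>N. \<forall>n\<ge>N. norm (s m - s n) < e"
    proof (intro exI allI impI)
      fix m n
      assume "N \<le> m" "N \<le> n"
      then have "inverse (Suc m) \<le> inverse (Suc N)" "inverse (Suc n) \<le> inverse (Suc N)"
        by (simp_all add: le_imp_inverse_le)
      then have "(norm (s m - s n))\<^sup>2 < e\<^sup>2"
        using spread[OF s_in s_in, of m n] s_close[of m] s_close[of n] N by linarith
      then show "norm (s m - s n) < e"
        using e by (simp add: power2_less_imp_less)
    qed
  qed
  then obtain p where lim: "s \<longlonglongrightarrow> p"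
    using Cauchy_convergent_iff convergent_def by blast
  have "(norm (x - p))\<^sup>2 \<le> d"
  proof (rule LIMSEQ_le)
    show "(\<lambda>n. (norm (x - s n))\<^sup>2) \<longlonglongrightarrow> (norm (x - p))\<^sup>2"
      by (intro tendsto_intros lim)
    show "(\<lambda>n. d + inverse (real (Suc n))) \<longlonglongrightarrow> d"
      by (rule LIMSEQ_inverse_real_of_nat_add)
    show "\<exists>N. \<forall>n\<ge>N. (norm (x - s n))\<^sup>2 \<le> d + inverse (real (Suc n))"
      using s_close less_imp_le by blast
  qed
  then have "\<forall>v\<in>V. norm (x - p) \<le> norm (x - v)"
    using d_le by (metis norm_ge_zero order.trans power2_le_imp_le)
  moreover have "p \<in> V"
    using closed_sequentially[OF V(2) s_in lim] .
  ultimately show ?thesis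
    by blast
qed

lemma nearest_point_orthogonal:
  fixes V :: "'a::complex_inner set"
  assumes V: "csubspace V" and p: "p \<in> V"
    and nearest: "\<And>v. v \<in> V \<Longrightarrow> norm (x - p) \<le> norm (x - v)"
    and v: "v \<in> V"
  shows "cinner (x - p) v = 0"
proof -
  have Re_zero: "Re (cinner (x - p) w) = 0" if w: "w \<in> V" for w
  proof (cases "w = 0")
    case False
    define a where "a = Re (cinner (x - p) w)"
    define t where "t = a / (norm w)\<^sup>2"
    have "p + t *\<^sub>R w \<in> V"
      using csubspace_imp_subspace[OF V] p w by (intro subspace_add subspace_scale)
    then have "norm (x - p) \<le> norm ((x - p) - t *\<^sub>R w)"
      using nearest by (simp add: diff_diff_eq)
    then have "(norm (x - p))\<^sup>2 \<le> (norm ((x - p) - t *\<^sub>R w))\<^sup>2"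
      by (simp add: power_mono)
    also have "\<dots> = (norm (x - p))\<^sup>2 + t\<^sup>2 * (norm w)\<^sup>2 - 2 * t * a"
      by (simp add: power2_norm_diff cinner_scaleR_right a_def power_mult_distrib)
    finally have "2 * t * a \<le> t\<^sup>2 * (norm w)\<^sup>2"
      by simp
    \<comment> \<open>with this choice of t the inequality reads 2 a^2 \<le> a^2\<close>
    then have "a\<^sup>2 \<le> 0"
      using False by (simp add: t_def power2_eq_square field_simps)
    then show ?thesis
      by (simp add: a_def)
  qed simp
  have "Re (cinner (x - p) (\<i> *\<^sub>C v)) = 0"
    using V v by (intro Re_zero csubspace_scaleC)
  then have "Im (cinner (x - p) v) = 0"
    by (simp add: cinner_scaleC_right)
  with Re_zero[OF v] show ?thesis
    by (simp add: complex_eq_iff)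
qed

definition proj :: "'a::complex_inner set \<Rightarrow> 'a \<Rightarrow> 'a" where
  "proj V x = (THE p. p \<in> V \<and> (\<forall>v\<in>V. cinner (x - p) v = 0))"

lemma orthogonal_residual_unique:
  fixes V :: "'a::complex_inner set"
  assumes V: "csubspace V" and "p \<in> V" "\<forall>v\<in>V. cinner (x - p) v = 0"
    and "q \<in> V" "\<forall>v\<in>V. cinner (x - q) v = 0"
  shows "p = q"
proof -
  have "p - q \<in> V"
    using assms csubspace_imp_subspace[OF V] by (simp add: subspace_diff)
  then have "cinner (x - q) (p - q) - cinner (x - p) (p - q) = 0"
    using assms by simp
  then have "cinner (p - q) (p - q) = 0"
    by (simp add: cinner_diff_left)
  then show ?thesis
    by (simp add: cinner_eq_zero_iff)
qed

context
  fixes V :: "'a::chilbert_space set"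
  assumes V: "csubspace V" "closed V"
begin

lemma proj_in_orth: "proj V x \<in> V \<and> (\<forall>v\<in>V. cinner (x - proj V x) v = 0)"
proof -
  obtain p where "p \<in> V" "\<forall>v\<in>V. norm (x - p) \<le> norm (x - v)"
    using csubspace_nearest_point[OF V] by blast
  then have p: "p \<in> V \<and> (\<forall>v\<in>V. cinner (x - p) v = 0)"
    using nearest_point_orthogonal[OF V(1)] by blast
  show ?thesis
    unfolding proj_def by (rule theI[of _ p]) (use p orthogonal_residual_unique[OF V(1)] in blast)+
qed

lemma proj_in: "proj V x \<in> V"
  using proj_in_orth by blast

lemma proj_orth: "v \<in> V \<Longrightarrow> cinner (x - proj V x) v = 0"
  using proj_in_orth by blast

lemma proj_eqI: "p \<in> V \<Longrightarrow> (\<And>v. v \<in> V \<Longrightarrow> cinner (x - p) v = 0) \<Longrightarrow> proj V x = p"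
  using orthogonal_residual_unique[OF V(1)] proj_in_orth by blast

lemma proj_id: "v \<in> V \<Longrightarrow> proj V v = v"
  by (rule proj_eqI) auto

lemma proj_add: "proj V (x + y) = proj V x + proj V y"
proof (rule proj_eqI)
  show "proj V x + proj V y \<in> V"
    using csubspace_imp_subspace[OF V(1)] by (intro subspace_add proj_in)
  show "cinner (x + y - (proj V x + proj V y)) v = 0" if "v \<in> V" for v
    using proj_orth[OF that, of x] proj_orth[OF that, of y]
    by (simp add: diff_add_eq_diff_diff_swap cinner_diff_left cinner_add_left)
qed

lemma proj_scaleC: "proj V (c *\<^sub>C x) = c *\<^sub>C proj V x"
proof (rule proj_eqI)
  show "c *\<^sub>C proj V x \<in> V"
    by (intro csubspace_scaleC[OF V(1)] proj_in)
  show "cinner (c *\<^sub>C x - c *\<^sub>C proj V x) v = 0" if "v \<in> V" for v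
    using proj_orth[OF that] by (simp add: scaleC_diff_right[symmetric] cinner_scaleC_left)
qed

lemma proj_self_adjoint: "cinner (proj V x) y = cinner x (proj V y)"
proof -
  have "cinner (proj V x) (y - proj V y) = 0" "cinner (x - proj V x) (proj V y) = 0"
    using proj_orth[OF proj_in] cinner_eq_zero_sym by blast+
  then show ?thesis
    by (simp add: cinner_diff_left cinner_diff_right)
qed

lemma norm_proj_le: "norm (proj V x) \<le> norm x"
proof -
  have "cinner (proj V x) (x - proj V x) = 0"
    using proj_orth[OF proj_in] cinner_eq_zero_sym by blast
  then have "(norm x)\<^sup>2 = (norm (proj V x))\<^sup>2 + (norm (x - proj V x))\<^sup>2"
    using pythagoras by fastforce
  then show ?thesis
    by (simp add: power2_le_imp_le)
qed

end

section \<open>Riesz representation and adjoints\<close>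

lemma bounded_clinear_bounded_linear: "bounded_clinear K \<Longrightarrow> bounded_linear K"
  by (simp add: bounded_clinear_def)

lemma bounded_clinear_scaleC: "bounded_clinear K \<Longrightarrow> K (c *\<^sub>C x) = c *\<^sub>C K x"
  by (simp add: bounded_clinear_def)

lemma bounded_clinear_compose: "bounded_clinear A \<Longrightarrow> bounded_clinear B \<Longrightarrow> bounded_clinear (A \<circ> B)"
  unfolding bounded_clinear_def comp_def by (auto intro: bounded_linear_compose)

lemma bounded_clinearI:
  fixes f :: "'a::complex_inner \<Rightarrow> 'b::complex_inner"
  assumes "\<And>x y. f (x + y) = f x + f y" "\<And>c x. f (c *\<^sub>C x) = c *\<^sub>C f x"
    and "\<And>x. norm (f x) \<le> norm x * B"
  shows "bounded_clinear f"
  unfolding bounded_clinear_def using assms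
  by (auto intro!: bounded_linear_intro[where K=B] simp: scaleR_scaleC)

lemma bounded_linear_range_subspace: "bounded_linear K \<Longrightarrow> subspace (range K)"
  by (simp add: bounded_linear.linear linear_subspace_image)

lemma null_space_csubspace: "bounded_clinear K \<Longrightarrow> csubspace (null_space K)"
  by (simp add: csubspace_def null_space_def bounded_clinear_scaleC
      linear_add linear_0 bounded_linear.linear bounded_clinear_bounded_linear)

lemma null_space_closed: "bounded_clinear K \<Longrightarrow> closed (null_space K)"
  unfolding null_space_def
  by (intro closed_Collect_eq linear_continuous_on continuous_on_const bounded_clinear_bounded_linear)

lemma range_csubspace:
  assumes K: "bounded_clinear K"
  shows "csubspace (range K)"
proof -
  have "subspace (range K)"
    using K by (simp add: bounded_linear_range_subspace bounded_clinear_bounded_linear)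
  moreover have "c *\<^sub>C K x \<in> range K" for c x
    using bounded_clinear_scaleC[OF K, of c x] by (metis rangeI)
  ultimately show ?thesis
    by (auto simp: csubspace_def subspace_0 subspace_add)
qed

lemma riesz_representation:
  fixes \<phi> :: "'a::chilbert_space \<Rightarrow> complex"
  assumes add: "\<And>x y. \<phi> (x + y) = \<phi> x + \<phi> y" and scale: "\<And>c x. \<phi> (c *\<^sub>C x) = c * \<phi> x"
    and bound: "\<And>x. cmod (\<phi> x) \<le> norm x * B"
  shows "\<exists>z. \<forall>x. \<phi> x = cinner x z"
proof (cases "\<forall>x. \<phi> x = 0")
  case False
  then obtain x0 where x0: "\<phi> x0 \<noteq> 0"
    by blast
  define N where "N = {x. \<phi> x = 0}"
  have zero: "\<phi> 0 = 0"
    using scale[of 0 0] by simp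
  have N: "csubspace N" "closed N"
  proof -
    show "csubspace N"
      unfolding csubspace_def N_def using zero by (simp add: add scale)
    have "bounded_linear \<phi>"
      by (rule bounded_linear_intro[where K=B]) (auto simp: add scaleR_scaleC scale scaleR_conv_of_real bound)
    then show "closed N"
      unfolding N_def by (intro closed_Collect_eq linear_continuous_on continuous_on_const)
  qed
  \<comment> \<open>u is a nonzero vector orthogonal to the kernel of \<phi>\<close>
  define u where "u = x0 - proj N x0"
  have "\<phi> (proj N x0) = 0"
    using proj_in[OF N] by (simp add: N_def)
  moreover have "\<phi> x0 = \<phi> u + \<phi> (proj N x0)"
    using add[of u "proj N x0"] by (simp add: u_def)
  ultimately have "u \<noteq> 0"
    using x0 zero by auto
  then have u_nz: "cinner u u \<noteq> 0"
    by (simp add: cinner_eq_zero_iff)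
  have "\<phi> x = cinner x (cnj (\<phi> u / cinner u u) *\<^sub>C u)" for x
  proof -
    have "\<phi> (\<phi> x *\<^sub>C u + (- \<phi> u) *\<^sub>C x) = 0"
      by (simp add: add scale)
    then have "\<phi> x *\<^sub>C u - \<phi> u *\<^sub>C x \<in> N"
      by (simp add: N_def scaleC_minus_left)
    then have "cinner (\<phi> x *\<^sub>C u - \<phi> u *\<^sub>C x) u = 0"
      unfolding u_def using proj_orth[OF N] cinner_eq_zero_sym by blast
    then have "\<phi> x * cinner u u = \<phi> u * cinner x u"
      by (simp add: cinner_diff_left cinner_scaleC_left)
    then show ?thesis
      using u_nz by (simp add: cinner_scaleC_right field_simps)
  qed
  then show ?thesis
    by blast
qed (auto intro: exI[of _ 0])

lemma adjoint_eqI: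
  assumes "\<And>x y. cinner (T x) y = cinner x (S y)"
  shows "adjoint T = S"
  unfolding adjoint_def
proof (rule the_equality)
  fix A
  assume A: "\<forall>x y. cinner (T x) y = cinner x (A y)"
  show "A = S"
  proof (rule ext, rule cinner_ext_right)
    show "cinner x (A y) = cinner x (S y)" for x y
      using A assms by metis
  qed
qed (use assms in blast)

lemma cinner_adjoint:
  fixes T :: "'a::chilbert_space \<Rightarrow> 'b::complex_inner"
  assumes T: "bounded_clinear T"
  shows "cinner (T x) y = cinner x (adjoint T y)"
proof -
  interpret T: bounded_linear T
    using T by (rule bounded_clinear_bounded_linear)
  obtain B where B: "\<And>x. norm (T x) \<le> norm x * B"
    using T.bounded by blast
  have "\<exists>z. \<forall>x. cinner (T x) y = cinner x z" for y
  proof (rule riesz_representation)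
    show "cinner (T (x + x')) y = cinner (T x) y + cinner (T x') y" for x x'
      by (simp add: T.add cinner_add_left)
    show "cinner (T (c *\<^sub>C x)) y = c * cinner (T x) y" for c x
      by (simp add: bounded_clinear_scaleC[OF T] cinner_scaleC_left)
    show "cmod (cinner (T x) y) \<le> norm x * (B * norm y)" for x
      using Cauchy_Schwarz_cinner[of "T x" y] mult_right_mono[OF B, of "norm y" x]
      by (simp add: mult.assoc)
  qed
  then obtain S where "\<And>x y. cinner (T x) y = cinner x (S y)"
    by metis
  moreover from this have "adjoint T = S"
    by (rule adjoint_eqI)
  ultimately show ?thesis
    by simp
qed

lemma cinner_adjoint_left:
  fixes T :: "'a::chilbert_space \<Rightarrow> 'b::complex_inner"
  assumes "bounded_clinear T"
  shows "cinner y (T x) = cinner (adjoint T y) x"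
  by (metis assms cinner_adjoint cinner_commute)

lemma adjoint_comp:
  fixes S :: "'b::chilbert_space \<Rightarrow> 'c::complex_inner" and T :: "'a::chilbert_space \<Rightarrow> 'b"
  assumes "bounded_clinear S" "bounded_clinear T"
  shows "adjoint (S \<circ> T) = adjoint T \<circ> adjoint S"
  by (rule adjoint_eqI) (simp add: assms cinner_adjoint)

section \<open>Bounded preimages under operators with closed range\<close>

subclass (in chilbert_space) banach ..

lemma closed_range_image_ball_somewhere_dense:
  fixes K :: "'a::real_normed_vector \<Rightarrow> 'b::banach"
  assumes "closed (range K)"
  shows "\<exists>n::nat. \<exists>y0\<in>range K. \<exists>e>0. range K \<inter> ball y0 e \<subseteq> closure (K ` cball 0 n)"
proof -
  define R where "R = top_of_set (range K)"
  define G where "G = range (\<lambda>n::nat. range K \<inter> closure (K ` cball 0 n))"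
  have "R interior_of \<Union>G \<noteq> {}"
  proof -
    have "range K \<subseteq> \<Union>G"
    proof
      fix y
      assume "y \<in> range K"
      then obtain x where y: "y = K x"
        by blast
      obtain n :: nat where "norm x \<le> n"
        using real_arch_simple by blast
      then have "y \<in> closure (K ` cball 0 n)"
        using closure_subset y by fastforce
      then show "y \<in> \<Union>G"
        using \<open>y \<in> range K\<close> by (auto simp: G_def)
    qed
    then have "\<Union>G = topspace R"
      by (auto simp: R_def G_def)
    then show ?thesis
      using interior_of_topspace[of R] by (simp add: R_def)
  qed
  moreover have "completely_metrizable_space R"
    unfolding R_def using assms
    by (simp add: completely_metrizable_space_closedin completely_metrizable_space_euclidean)
  moreover have "closedin R T" if "T \<in> G" for T
    using that by (auto simp: R_def G_def closedin_closed)
  ultimately obtain T where "T \<in> G" "R interior_of T \<noteq> {}"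
    using Baire_category_alt[of R G] by (auto simp: G_def)
  then obtain n :: nat and U where "openin R U" "U \<noteq> {}" "U \<subseteq> range K \<inter> closure (K ` cball 0 n)"
    by (auto simp: G_def interior_of_def)
  then obtain W y0 where W: "open W" "y0 \<in> W" "range K \<inter> W \<subseteq> closure (K ` cball 0 n)"
    and y0: "y0 \<in> range K"
    by (auto simp: R_def openin_open)
  then obtain e where "e > 0" "ball y0 e \<subseteq> W"
    by (meson openE)
  then show ?thesis
    using W(3) y0 by blast
qed

lemma closed_range_approximate_preimage:
  fixes K :: "'a::real_normed_vector \<Rightarrow> 'b::banach"
  assumes K: "bounded_linear K" and "closed (range K)"
  shows "\<exists>M\<ge>0. \<forall>y\<in>range K. \<exists>x. norm x \<le> M * norm y \<and> norm (y - K x) \<le> norm y / 2"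
proof -
  interpret K: bounded_linear K
    by (rule K)
  obtain n :: nat and y0 e where y0: "y0 \<in> range K" and e: "e > 0"
    and dense: "range K \<inter> ball y0 e \<subseteq> closure (K ` cball 0 n)"
    using closed_range_image_ball_somewhere_dense[OF assms(2)] by blast
  \<comment> \<open>translating the dense ball from y0 to the origin doubles the radius in the domain\<close>
  have near_origin: "\<exists>x. norm x \<le> 2 * n \<and> norm (y - K x) < d"
    if y: "y \<in> range K" "norm y < e" and d: "d > 0" for y d
  proof -
    have "y0 + y \<in> range K"
      using y0 y bounded_linear_range_subspace[OF K] by (simp add: subspace_add)
    moreover have "y0 + y \<in> ball y0 e" "y0 \<in> ball y0 e"
      using y e by (simp_all add: dist_norm)
    ultimately have "y0 + y \<in> closure (K ` cball 0 n)" "y0 \<in> closure (K ` cball 0 n)"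
      using dense y0 by blast+
    then have approx: "\<forall>\<epsilon>>0. \<exists>x\<in>cball 0 n. dist (K x) (y0 + y) < \<epsilon>"
      "\<forall>\<epsilon>>0. \<exists>x\<in>cball 0 n. dist (K x) y0 < \<epsilon>"
      unfolding closure_approachable by simp_all
    obtain x1 x2 where x12: "x1 \<in> cball 0 n" "x2 \<in> cball 0 n"
      "dist (K x1) (y0 + y) < d/2" "dist (K x2) y0 < d/2"
      using approx(1)[rule_format, OF half_gt_zero[OF d]] approx(2)[rule_format, OF half_gt_zero[OF d]]
      by blast
    have "y - K (x1 - x2) = (K x2 - y0) - (K x1 - (y0 + y))"
      by (simp add: K.diff algebra_simps)
    then have "norm (y - K (x1 - x2)) \<le> norm (K x2 - y0) + norm (K x1 - (y0 + y))"
      by (metis norm_triangle_ineq4)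
    also have "\<dots> < d"
      using x12(3,4) by (simp add: dist_norm)
    finally have "norm (y - K (x1 - x2)) < d" .
    moreover have "norm (x1 - x2) \<le> 2 * n"
      using x12(1,2) norm_triangle_ineq4[of x1 x2] by simp
    ultimately show ?thesis
      by blast
  qed
  define M where "M = 4 * n / e"
  have "\<exists>x. norm x \<le> M * norm y \<and> norm (y - K x) \<le> norm y / 2" if y: "y \<in> range K" for y
  proof (cases "y = 0")
    case False
    define s where "s = e / (2 * norm y)"
    have s: "s > 0" "norm (s *\<^sub>R y) < e"
      using e False by (simp_all add: s_def)
    moreover have "s *\<^sub>R y \<in> range K"
      using y bounded_linear_range_subspace[OF K] by (simp add: subspace_scale)
    ultimately obtain x where x: "norm x \<le> 2 * n" "norm (s *\<^sub>R y - K x) < e / 4"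
      using near_origin[of "s *\<^sub>R y" "e / 4"] e by auto
    have "norm ((1/s) *\<^sub>R x) = norm x / s"
      using s by simp
    also have "\<dots> \<le> 2 * n / s"
      using x(1) s by (simp add: divide_right_mono)
    also have "\<dots> = M * norm y"
      using e False by (simp add: s_def M_def field_simps)
    finally have small_preimage: "norm ((1/s) *\<^sub>R x) \<le> M * norm y" .
    have "y - K ((1/s) *\<^sub>R x) = (1/s) *\<^sub>R (s *\<^sub>R y - K x)"
      using s by (simp add: K.scaleR algebra_simps)
    then have "norm (y - K ((1/s) *\<^sub>R x)) = norm (s *\<^sub>R y - K x) / s"
      using s by simp
    also have "\<dots> \<le> (e / 4) / s"
      by (intro divide_right_mono) (use x(2) s in auto)
    also have "\<dots> = norm y / 2"
      using e False by (simp add: s_def field_simps)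
    finally show ?thesis
      using small_preimage
      by blast
  qed (auto intro: exI[of _ 0] simp: K.zero)
  moreover have "M \<ge> 0"
    using e by (simp add: M_def)
  ultimately show ?thesis
    by blast
qed

lemma bounded_preimage_from_approximate:
  fixes K :: "'a::banach \<Rightarrow> 'b::real_normed_vector"
  assumes K: "bounded_linear K" and M: "M \<ge> 0"
    and approx: "\<And>y. y \<in> range K \<Longrightarrow> \<exists>x. norm x \<le> M * norm y \<and> norm (y - K x) \<le> norm y / 2"
    and y: "y \<in> range K"
  shows "\<exists>x. K x = y \<and> norm x \<le> 2 * M * norm y"
proof -
  interpret K: bounded_linear K
    by (rule K)
  have "\<forall>y\<in>range K. \<exists>x. norm x \<le> M * norm y \<and> norm (y - K x) \<le> norm y / 2"
    using approx by blast
  then obtain g where g: "\<And>y. y \<in> range K \<Longrightarrow> norm (g y) \<le> M * norm y \<and> norm (y - K (g y)) \<le> norm y / 2"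
    using bchoice by metis
  \<comment> \<open>successive residuals; their preimages under g sum to a preimage of y\<close>
  define r where "r = rec_nat y (\<lambda>_ z. z - K (g z))"
  have r_Suc: "r (Suc k) = r k - K (g (r k))" for k
    by (simp add: r_def)
  have r: "r k \<in> range K \<and> norm (r k) \<le> norm y * (1/2) ^ k" for k
  proof (induction k)
    case (Suc k)
    then have "r (Suc k) \<in> range K"
      using bounded_linear_range_subspace[OF K] by (simp add: r_Suc subspace_diff)
    then show ?case
      using Suc g[of "r k"] by (auto simp: r_Suc)
  qed (simp add: r_def y)
  define xs where "xs k = g (r k)" for k
  have xs_le: "norm (xs k) \<le> M * norm y * (1/2) ^ k" for k
    using g[of "r k"] r[of k] mult_left_mono[OF conjunct2[OF r[of k]] M]
    by (simp add: xs_def mult.assoc)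
  have geom: "summable (\<lambda>k. M * norm y * (1/2::real) ^ k)"
    by (intro summable_mult summable_geometric) simp
  have summable_norm_xs: "summable (\<lambda>k. norm (xs k))"
    by (rule summable_comparison_test'[OF geom]) (simp add: xs_le)
  then have summable_xs: "summable xs"
    by (rule summable_norm_cancel)
  have "r \<longlonglongrightarrow> 0"
  proof (rule Lim_null_comparison)
    show "\<forall>\<^sub>F k in sequentially. norm (r k) \<le> norm y * (1/2) ^ k"
      using r by simp
    show "(\<lambda>k. norm y * (1/2::real) ^ k) \<longlonglongrightarrow> 0"
      by (simp add: LIMSEQ_power_zero tendsto_mult_right_zero)
  qed
  then have "(\<lambda>k. K (xs k)) sums y"
    using telescope_sums'[of r 0] by (simp add: r_Suc xs_def r_def)
  then have "K (suminf xs) = y"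
    by (simp add: K.suminf[OF summable_xs] sums_iff)
  moreover have "norm (suminf xs) \<le> 2 * M * norm y"
  proof -
    have "norm (suminf xs) \<le> (\<Sum>k. M * norm y * (1/2::real) ^ k)"
      using summable_norm[OF summable_norm_xs] suminf_le[OF xs_le summable_norm_xs geom] by linarith
    also have "\<dots> = 2 * M * norm y"
      using suminf_geometric[of "1/2::real"] by (simp add: suminf_mult)
    finally show ?thesis .
  qed
  ultimately show ?thesis
    by blast
qed

lemma closed_range_bounded_preimage:
  fixes K :: "'a::banach \<Rightarrow> 'b::banach"
  assumes "bounded_linear K" "closed (range K)"
  shows "\<exists>C\<ge>0. \<forall>y\<in>range K. \<exists>x. K x = y \<and> norm x \<le> C * norm y"
proof -
  obtain M where M: "M \<ge> 0"
    and approx: "\<And>y. y \<in> range K \<Longrightarrow> \<exists>x. norm x \<le> M * norm y \<and> norm (y - K x) \<le> norm y / 2"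
    using closed_range_approximate_preimage[OF assms] by blast
  then show ?thesis
    using bounded_preimage_from_approximate[OF assms(1) M approx] by (intro exI[of _ "2 * M"]) auto
qed

section \<open>The Moore--Penrose inverse\<close>

definition is_pseudo_inverse :: "('a::complex_inner \<Rightarrow> 'b::complex_inner) \<Rightarrow> ('b \<Rightarrow> 'a) \<Rightarrow> bool" where
  "is_pseudo_inverse K A \<longleftrightarrow> bounded_clinear A \<and> K \<circ> A \<circ> K = K \<and> A \<circ> K \<circ> A = A
      \<and> adjoint (K \<circ> A) = K \<circ> A \<and> adjoint (A \<circ> K) = A \<circ> K"

lemma is_pseudo_inverseD:
  fixes K :: "'a::chilbert_space \<Rightarrow> 'b::chilbert_space"
  assumes K: "bounded_clinear K" and A: "is_pseudo_inverse K A"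
  shows "bounded_clinear A" "K (A (K x)) = K x" "A (K (A y)) = A y"
    and "cinner (K (A y)) y' = cinner y (K (A y'))" "cinner (A (K x)) x' = cinner x (A (K x'))"
proof -
  show A_bcl: "bounded_clinear A" "K (A (K x)) = K x" "A (K (A y)) = A y"
    using A by (auto simp: is_pseudo_inverse_def fun_eq_iff)
  show "cinner (K (A y)) y' = cinner y (K (A y'))"
    using cinner_adjoint[OF bounded_clinear_compose[OF K A_bcl(1)], of y y'] A
    by (simp add: is_pseudo_inverse_def)
  show "cinner (A (K x)) x' = cinner x (A (K x'))"
    using cinner_adjoint[OF bounded_clinear_compose[OF A_bcl(1) K], of x x'] A
    by (simp add: is_pseudo_inverse_def)
qed

lemma is_pseudo_inverse_unique:
  fixes K :: "'a::chilbert_space \<Rightarrow> 'b::chilbert_space"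
  assumes K: "bounded_clinear K" and A: "is_pseudo_inverse K A" and B: "is_pseudo_inverse K B"
  shows "A = B"
proof -
  note A = is_pseudo_inverseD[OF K A] and B = is_pseudo_inverseD[OF K B]
  have KA_KB: "K (A y) = K (B y)" for y
  proof (rule cinner_ext_left)
    fix y'
    have "cinner (K (A y)) y' = cinner (K (B (K (A y)))) y'"
      by (simp add: B(2))
    also have "\<dots> = cinner (K (A y)) (K (B y'))"
      by (rule B(4))
    also have "\<dots> = cinner y (K (A (K (B y'))))"
      by (rule A(4))
    also have "\<dots> = cinner (K (B y)) y'"
      by (simp add: A(2) B(4))
    finally show "cinner (K (A y)) y' = cinner (K (B y)) y'" .
  qed
  have AK_BK: "A (K x) = B (K x)" for x
  proof (rule cinner_ext_left)
    fix x'
    have "cinner (A (K x)) x' = cinner (A (K (B (K x)))) x'"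
      by (simp add: B(2))
    also have "\<dots> = cinner (B (K x)) (A (K x'))"
      by (rule A(5))
    also have "\<dots> = cinner x (B (K (A (K x'))))"
      by (rule B(5))
    also have "\<dots> = cinner (B (K x)) x'"
      by (simp add: A(2) B(5))
    finally show "cinner (A (K x)) x' = cinner (B (K x)) x'" .
  qed
  show ?thesis
  proof
    fix y
    have "A y = A (K (B y))"
      by (metis A(3) KA_KB)
    also have "\<dots> = B y"
      by (metis AK_BK B(3))
    finally show "A y = B y" .
  qed
qed

lemma is_pseudo_inverse_range_orth_null_space:
  fixes K :: "'a::chilbert_space \<Rightarrow> 'b::chilbert_space"
  assumes K: "bounded_clinear K" and A: "is_pseudo_inverse K A"
  shows "A y \<in> orth_compl (null_space K)"
proof -
  note A = is_pseudo_inverseD[OF K A]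
  have "cinner (A y) n = 0" if "K n = 0" for n
    using A(5)[of "A y" n] that bounded_clinear_bounded_linear[OF A(1)]
    by (simp add: A(3) linear_0 bounded_linear.linear)
  then show ?thesis
    by (simp add: orth_compl_def null_space_def)
qed

lemma is_pseudo_inverse_left_inverse_on_orth_null_space:
  fixes K :: "'a::chilbert_space \<Rightarrow> 'b::chilbert_space"
  assumes K: "bounded_clinear K" and A: "is_pseudo_inverse K A"
    and f: "f \<in> orth_compl (null_space K)"
  shows "A (K f) = f"
proof -
  interpret K: bounded_linear K
    using K by (rule bounded_clinear_bounded_linear)
  have "f - A (K f) \<in> null_space K"
    using is_pseudo_inverseD(2)[OF K A] by (simp add: null_space_def K.diff)
  moreover have "f - A (K f) \<in> orth_compl (null_space K)"
    using f is_pseudo_inverse_range_orth_null_space[OF K A]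
    by (intro subspace_diff[OF orth_compl_subspace])
  ultimately show ?thesis
    using orth_compl_disjoint by fastforce
qed

lemma closed_range_lower_bound:
  fixes K :: "'a::chilbert_space \<Rightarrow> 'b::chilbert_space"
  assumes K: "bounded_clinear K" and "closed (range K)"
  shows "\<exists>C\<ge>0. \<forall>u\<in>orth_compl (null_space K). norm u \<le> C * norm (K u)"
proof -
  interpret K: bounded_linear K
    using K by (rule bounded_clinear_bounded_linear)
  obtain C where C: "C \<ge> 0" "\<forall>y\<in>range K. \<exists>x. K x = y \<and> norm x \<le> C * norm y"
    using closed_range_bounded_preimage[OF K.bounded_linear_axioms assms(2)] by blast
  have "norm u \<le> C * norm (K u)" if u: "u \<in> orth_compl (null_space K)" for u
  proof -
    obtain x where x: "K x = K u" "norm x \<le> C * norm (K u)"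
      using C(2) by blast
    \<comment> \<open>u - x lies in the null space, so u is orthogonal to it\<close>
    have "cinner u (u - x) = 0"
      using u x(1) by (simp add: orth_compl_def null_space_def K.diff)
    then have "(norm u)\<^sup>2 = Re (cinner u x)"
      by (simp add: power2_norm_eq_cinner cinner_diff_right)
    also have "\<dots> \<le> norm u * norm x"
      using Cauchy_Schwarz_cinner complex_Re_le_cmod order.trans by blast
    finally have "norm u \<le> norm x"
      by (cases "u = 0") (auto simp: power2_eq_square mult_le_cancel_left)
    with x(2) show ?thesis
      by simp
  qed
  with C(1) show ?thesis
    by blast
qed

text \<open>The minimal-norm least-squares solution of K u = y.\<close>

definition least_squares_inverse :: "('a::complex_inner \<Rightarrow> 'b::complex_inner) \<Rightarrow> 'b \<Rightarrow> 'a" where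
  "least_squares_inverse K y = (THE u. u \<in> orth_compl (null_space K) \<and> K u = proj (range K) y)"

context
  fixes K :: "'a::chilbert_space \<Rightarrow> 'b::chilbert_space"
  assumes K: "bounded_clinear K" and closed_range: "closed (range K)"
begin

interpretation K: bounded_linear K
  using K by (rule bounded_clinear_bounded_linear)

lemma range_closed_csubspace: "csubspace (range K)" "closed (range K)"
  using range_csubspace[OF K] closed_range by auto

lemma null_space_closed_csubspace: "csubspace (null_space K)" "closed (null_space K)"
  using null_space_csubspace[OF K] null_space_closed[OF K] by auto

lemma orth_null_space_preimage_unique:
  assumes "u \<in> orth_compl (null_space K)" "u' \<in> orth_compl (null_space K)" "K u = K u'"
  shows "u = u'"
proof -
  have "u - u' \<in> null_space K"
    using assms(3) by (simp add: null_space_def K.diff)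
  moreover have "u - u' \<in> orth_compl (null_space K)"
    using assms(1,2) by (intro subspace_diff[OF orth_compl_subspace])
  ultimately show ?thesis
    using orth_compl_disjoint by fastforce
qed

lemma least_squares_inverse_eqI:
  "u \<in> orth_compl (null_space K) \<Longrightarrow> K u = proj (range K) y \<Longrightarrow> least_squares_inverse K y = u"
  unfolding least_squares_inverse_def
  by (rule the_equality) (auto intro: orth_null_space_preimage_unique)

lemma least_squares_inverse_eq_minus_proj: "K x = proj (range K) y \<Longrightarrow> least_squares_inverse K y = x - proj (null_space K) x"
proof (rule least_squares_inverse_eqI)
  show "x - proj (null_space K) x \<in> orth_compl (null_space K)"
    using proj_orth[OF null_space_closed_csubspace] by (simp add: orth_compl_def)
  show "K x = proj (range K) y \<Longrightarrow> K (x - proj (null_space K) x) = proj (range K) y"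
    using proj_in[OF null_space_closed_csubspace] by (simp add: null_space_def K.diff)
qed

lemma least_squares_inverse:
  "least_squares_inverse K y \<in> orth_compl (null_space K)"
  "K (least_squares_inverse K y) = proj (range K) y"
proof -
  obtain x where x: "K x = proj (range K) y"
    using proj_in[OF range_closed_csubspace, of y] by (metis rangeE)
  then show "least_squares_inverse K y \<in> orth_compl (null_space K)"
    using proj_orth[OF null_space_closed_csubspace]
    by (simp add: least_squares_inverse_eq_minus_proj orth_compl_def)
  show "K (least_squares_inverse K y) = proj (range K) y"
    using x proj_in[OF null_space_closed_csubspace]
    by (simp add: least_squares_inverse_eq_minus_proj null_space_def K.diff)
qed

lemma least_squares_inverse_K: "least_squares_inverse K (K x) = x - proj (null_space K) x"
  by (simp add: least_squares_inverse_eq_minus_proj proj_id[OF range_closed_csubspace])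

lemma bounded_clinear_least_squares_inverse: "bounded_clinear (least_squares_inverse K)"
proof -
  obtain C where C0: "C \<ge> 0"
    and C: "\<And>u. u \<in> orth_compl (null_space K) \<Longrightarrow> norm u \<le> C * norm (K u)"
    using closed_range_lower_bound[OF K closed_range] by blast
  show ?thesis
  proof (rule bounded_clinearI[where B=C])
    show "least_squares_inverse K (x + y) = least_squares_inverse K x + least_squares_inverse K y" for x y
      using least_squares_inverse
      by (intro least_squares_inverse_eqI subspace_add[OF orth_compl_subspace])
        (simp_all add: K.add proj_add[OF range_closed_csubspace])
    show "least_squares_inverse K (c *\<^sub>C x) = c *\<^sub>C least_squares_inverse K x" for c x
      using least_squares_inverse
      by (intro least_squares_inverse_eqI csubspace_scaleC[OF orth_compl_csubspace])
        (simp_all add: bounded_clinear_scaleC[OF K] proj_scaleC[OF range_closed_csubspace])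
    show "norm (least_squares_inverse K y) \<le> norm y * C" for y
    proof -
      have "norm (least_squares_inverse K y) \<le> C * norm (proj (range K) y)"
        using C[OF least_squares_inverse(1)] by (simp add: least_squares_inverse(2))
      also have "\<dots> \<le> C * norm y"
        by (rule mult_left_mono[OF norm_proj_le[OF range_closed_csubspace] C0])
      finally show ?thesis
        by (simp add: mult.commute)
    qed
  qed
qed

lemma is_pseudo_inverse_least_squares_inverse: "is_pseudo_inverse K (least_squares_inverse K)"
  unfolding is_pseudo_inverse_def
proof (intro conjI)
  show "K \<circ> least_squares_inverse K \<circ> K = K"
    by (simp add: fun_eq_iff least_squares_inverse(2) proj_id[OF range_closed_csubspace])
  have "least_squares_inverse K (K (least_squares_inverse K y)) = least_squares_inverse K y" for y
    using least_squares_inverse proj_id[OF range_closed_csubspace proj_in[OF range_closed_csubspace]]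
    by (intro least_squares_inverse_eqI) simp_all
  then show "least_squares_inverse K \<circ> K \<circ> least_squares_inverse K = least_squares_inverse K"
    by (simp add: fun_eq_iff)
  show "adjoint (K \<circ> least_squares_inverse K) = K \<circ> least_squares_inverse K"
    by (rule adjoint_eqI) (simp add: least_squares_inverse(2) proj_self_adjoint[OF range_closed_csubspace])
  show "adjoint (least_squares_inverse K \<circ> K) = least_squares_inverse K \<circ> K"
    by (rule adjoint_eqI)
      (simp add: least_squares_inverse_K cinner_diff_left cinner_diff_right
        proj_self_adjoint[OF null_space_closed_csubspace])
qed (rule bounded_clinear_least_squares_inverse)

end

lemma is_pseudo_inverse_pseudo_inverse:
  fixes K :: "'a::chilbert_space \<Rightarrow> 'b::chilbert_space"
  assumes "bounded_clinear K" "closed (range K)"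
  shows "is_pseudo_inverse K (pseudo_inverse K)"
proof -
  have "pseudo_inverse K = (THE A. is_pseudo_inverse K A)"
    by (simp add: pseudo_inverse_def is_pseudo_inverse_def)
  then show ?thesis
    using is_pseudo_inverse_least_squares_inverse[OF assms] is_pseudo_inverse_unique[OF assms(1)]
    by (metis theI)
qed

section \<open>Transforming Parseval continuous frames\<close>

lemma parseval_cont_L_frame_compose:
  fixes L T :: "'a::chilbert_space \<Rightarrow> 'a"
  assumes F: "parseval_cont_L_frame M L F" and L: "bounded_clinear L" and T: "bounded_clinear T"
  shows "parseval_cont_L_frame M (T \<circ> L) (\<lambda>\<omega>. T (F \<omega>))"
proof -
  have "cinner f (T (F \<omega>)) = cinner (adjoint T f) (F \<omega>)" for f \<omega>
    using T by (rule cinner_adjoint_left)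
  moreover have "adjoint (T \<circ> L) f = adjoint L (adjoint T f)" for f
    using adjoint_comp[OF T L] by simp
  ultimately show ?thesis
    using F by (simp add: parseval_cont_L_frame_def weakly_measurable_def)
qed

lemma parseval_cont_L_frame_imp_frame_on:
  assumes "parseval_cont_L_frame M L F" "\<And>\<omega>. F \<omega> \<in> V" "\<And>f. f \<in> V \<Longrightarrow> adjoint L f = f"
  shows "parseval_cont_frame_on M V F"
  using assms by (simp add: parseval_cont_L_frame_def parseval_cont_frame_on_def weakly_measurable_def)

theorem lemma3p5:
  fixes M :: "'b measure"
    and K :: "'a::chilbert_space \<Rightarrow> 'a"
    and F :: "'b \<Rightarrow> 'a"
  assumes "separable_space TYPE('a)"
    and "bounded_clinear K"
    and "closed (range K)"
    and "parseval_cont_L_frame M K F"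
  shows "parseval_cont_frame_on M (orth_compl (null_space K)) (\<lambda>\<omega>. pseudo_inverse K (F \<omega>))
    \<and> parseval_cont_L_frame M (pseudo_inverse K \<circ> K) (\<lambda>\<omega>. pseudo_inverse K (F \<omega>))
    \<and> parseval_cont_L_frame M K (\<lambda>\<omega>. K (pseudo_inverse K (F \<omega>)))"
proof -
  note K = assms(2) and frame = assms(4)
  define A where "A = pseudo_inverse K"
  have A: "is_pseudo_inverse K A"
    unfolding A_def using K assms(3) by (rule is_pseudo_inverse_pseudo_inverse)
  then have A_bcl: "bounded_clinear A"
    by (simp add: is_pseudo_inverse_def)
  have frame_A: "parseval_cont_L_frame M (A \<circ> K) (\<lambda>\<omega>. A (F \<omega>))"
    using frame K A_bcl by (rule parseval_cont_L_frame_compose)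
  have "parseval_cont_L_frame M (K \<circ> A \<circ> K) (\<lambda>\<omega>. K (A (F \<omega>)))"
    using parseval_cont_L_frame_compose[OF frame K bounded_clinear_compose[OF K A_bcl]]
    by (simp add: comp_assoc)
  then have frame_KA: "parseval_cont_L_frame M K (\<lambda>\<omega>. K (A (F \<omega>)))"
    using A by (simp add: is_pseudo_inverse_def)
  have "parseval_cont_frame_on M (orth_compl (null_space K)) (\<lambda>\<omega>. A (F \<omega>))"
  proof (rule parseval_cont_L_frame_imp_frame_on[OF frame_A])
    show "A (F \<omega>) \<in> orth_compl (null_space K)" for \<omega>
      using K A by (rule is_pseudo_inverse_range_orth_null_space)
    show "adjoint (A \<circ> K) f = f" if "f \<in> orth_compl (null_space K)" for f
      using A is_pseudo_inverse_left_inverse_on_orth_null_space[OF K A that] by (simp add: is_pseudo_inverse_def)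
  qed
  with frame_A frame_KA show ?thesis
    unfolding A_def by blast
qed

end
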